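(* Let $G$ be a triangular graph and run the procedure described in the context on $G$, starting with two vertices of the outer triangle as the distinguished vertices $v_1,v_2$ (clockwise consecutive, with the edge $v_1v_2$ given some orientation). Then the orientation of $G$ constructed by the procedure contains no clockwise oriented triangle, i.e., no directed cycle of length $3$ that is traversed clockwise in the plane embedding.
   Context: A triangular graph is a plane graph with at least 3 vertices all of whose faces, including the outer one, are triangles. A near triangulation is a 2-connected plane graph whose outer face is bounded by a cycle (the outer cycle) and all of whose inner faces are triangles. The procedure: its input is a near triangulation $H$ with two distinguished vertices $v_1,v_2$ such that $v_2$ immediately follows $v_1$ clockwise on the outer cycle; the edge $v_1v_2$ is already oriented, other edges are not. It orients every edge and gives each edge a strength 1 or 2, as follows. (Recursive step) If the outer cycle has a chord $v_av_b$, it splits the outer cycle into cycles $C_1$ (containing $v_1,v_2$) and $C_2$; let $H_1,H_2$ be the subgraphs formed by $C_1$, $C_2$ with their interiors. Run the procedure first on $H_1$ with distinguished vertices $v_1,v_2$, and then on $H_2$ with the endpoints of the chord as distinguished vertices, ordered so that the second immediately follows the first clockwise on the outer cycle of $H_2$ (the chord has been oriented during the run on $H_1$). (Orienting step) If the outer cycle has no chord, let $v_3$ be the vertex immediately following $v_2$ clockwise on the outer cycle. Every edge of the current graph incident to $v_3$ that lies on the outer cycle is oriented towards $v_3$ and given strength 1; every other edge of the current graph incident to $v_3$ is oriented away from $v_3$ and given strength 2. Then $v_3$ is deleted, and if vertices other than $v_1,v_2$ remain, the procedure is called recursively on the remaining graph with the same distinguished vertices $v_1,v_2$. *)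

theory Defs
  imports "HOL-Complex_Analysis.Complex_Analysis"
begin

text \<open>Plane graphs are encoded geometrically: vertices are points of the complex plane,
  an (undirected, simple) edge is a two-element set of vertices, and the drawing of the edge
  between u and v is the arc gam u v (gam v u is its reverse).\<close>

type_synonym drawing = "complex \<Rightarrow> complex \<Rightarrow> real \<Rightarrow> complex"

definition plane_graph :: "drawing \<Rightarrow> complex set \<Rightarrow> complex set set \<Rightarrow> bool" where
  "plane_graph gam V E \<longleftrightarrow>
     finite V \<and>
     (\<forall>e\<in>E. \<exists>u v. e = {u, v} \<and> u \<noteq> v \<and> u \<in> V \<and> v \<in> V) \<and>
     (\<forall>u v. {u, v} \<in> E \<longrightarrow> u \<noteq> v \<longrightarrow>
        arc (gam u v) \<and> pathstart (gam u v) = u \<and> pathfinish (gam u v) = v \<and>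
        gam v u = reversepath (gam u v) \<and> path_image (gam u v) \<inter> V = {u, v}) \<and>
     (\<forall>u v x y. {u, v} \<in> E \<longrightarrow> {x, y} \<in> E \<longrightarrow> {u, v} \<noteq> {x, y} \<longrightarrow>
        path_image (gam u v) \<inter> path_image (gam x y) \<subseteq> {u, v} \<inter> {x, y})"

definition drawn :: "drawing \<Rightarrow> complex set \<Rightarrow> complex set set \<Rightarrow> complex set" where
  "drawn gam W F = W \<union> \<Union>{path_image (gam u v) | u v. {u, v} \<in> F \<and> u \<noteq> v}"

definition faces :: "drawing \<Rightarrow> complex set \<Rightarrow> complex set set \<Rightarrow> complex set set" where
  "faces gam W F = components (- drawn gam W F)"

fun walk_path :: "drawing \<Rightarrow> complex list \<Rightarrow> real \<Rightarrow> complex" where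
  "walk_path gam (u # v # w # rest) = gam u v +++ walk_path gam (v # w # rest)"
| "walk_path gam [u, v] = gam u v"
| "walk_path gam _ = linepath 0 0"

definition cycle_path :: "drawing \<Rightarrow> complex list \<Rightarrow> real \<Rightarrow> complex" where
  "cycle_path gam cs = walk_path gam (cs @ [hd cs])"

definition is_cycle :: "complex set set \<Rightarrow> complex list \<Rightarrow> bool" where
  "is_cycle F cs \<longleftrightarrow> distinct cs \<and> length cs \<ge> 3 \<and>
     (\<forall>i < length cs. {cs ! i, cs ! ((i + 1) mod length cs)} \<in> F)"

definition succ_on :: "complex list \<Rightarrow> complex \<Rightarrow> complex \<Rightarrow> bool" where
  "succ_on cs a b \<longleftrightarrow> (\<exists>i < length cs. cs ! i = a \<and> cs ! ((i + 1) mod length cs) = b)"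

definition clockwise :: "drawing \<Rightarrow> complex list \<Rightarrow> bool" where
  "clockwise gam cs \<longleftrightarrow>
     (\<forall>z \<in> inside (path_image (cycle_path gam cs)). winding_number (cycle_path gam cs) z = -1)"

definition is_triangle :: "complex set set \<Rightarrow> complex \<Rightarrow> complex \<Rightarrow> complex \<Rightarrow> bool" where
  "is_triangle F a b c \<longleftrightarrow> distinct [a, b, c] \<and> {a, b} \<in> F \<and> {b, c} \<in> F \<and> {c, a} \<in> F"

definition triangle_face :: "drawing \<Rightarrow> complex set set \<Rightarrow> complex set \<Rightarrow> bool" where
  "triangle_face gam F f \<longleftrightarrow>
     (\<exists>a b c. is_triangle F a b c \<and> frontier f = path_image (cycle_path gam [a, b, c]))"

definition triangular_graph :: "drawing \<Rightarrow> complex set \<Rightarrow> complex set set \<Rightarrow> bool" where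
  "triangular_graph gam V E \<longleftrightarrow> plane_graph gam V E \<and> card V \<ge> 3 \<and>
     (\<forall>f \<in> faces gam V E. triangle_face gam E f)"

definition outer_cycle :: "drawing \<Rightarrow> complex set \<Rightarrow> complex set set \<Rightarrow> complex list \<Rightarrow> bool" where
  "outer_cycle gam W F cs \<longleftrightarrow> is_cycle F cs \<and> set cs \<subseteq> W \<and> clockwise gam cs \<and>
     (\<forall>f \<in> faces gam W F. \<not> bounded f \<longrightarrow> frontier f = path_image (cycle_path gam cs))"

definition gconnected :: "complex set \<Rightarrow> complex set set \<Rightarrow> bool" where
  "gconnected W F \<longleftrightarrow> W \<noteq> {} \<and>
     (\<forall>x \<in> W. \<forall>y \<in> W. (\<lambda>u v. {u, v} \<in> F \<and> u \<in> W \<and> v \<in> W)\<^sup>*\<^sup>* x y)"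

definition two_connected :: "complex set \<Rightarrow> complex set set \<Rightarrow> bool" where
  "two_connected W F \<longleftrightarrow> card W \<ge> 3 \<and> gconnected W F \<and>
     (\<forall>x \<in> W. gconnected (W - {x}) {e \<in> F. x \<notin> e})"

definition near_triangulation :: "drawing \<Rightarrow> complex set \<Rightarrow> complex set set \<Rightarrow> bool" where
  "near_triangulation gam W F \<longleftrightarrow> plane_graph gam W F \<and> two_connected W F \<and>
     (\<exists>cs. outer_cycle gam W F cs) \<and>
     (\<forall>f \<in> faces gam W F. bounded f \<longrightarrow> triangle_face gam F f)"

definition closed_disk :: "drawing \<Rightarrow> complex list \<Rightarrow> complex set" where
  "closed_disk gam C = path_image (cycle_path gam C) \<union> inside (path_image (cycle_path gam C))"

definition disk_V :: "drawing \<Rightarrow> complex set \<Rightarrow> complex list \<Rightarrow> complex set" where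
  "disk_V gam W C = W \<inter> closed_disk gam C"

definition disk_E :: "drawing \<Rightarrow> complex set set \<Rightarrow> complex list \<Rightarrow> complex set set" where
  "disk_E gam F C = {e \<in> F. \<exists>u v. e = {u, v} \<and> u \<noteq> v \<and> path_image (gam u v) \<subseteq> closed_disk gam C}"

definition has_chord :: "complex set set \<Rightarrow> complex list \<Rightarrow> bool" where
  "has_chord F cs \<longleftrightarrow>
     (\<exists>k a p b q. rotate k cs = a # p @ b # q \<and> p \<noteq> [] \<and> q \<noteq> [] \<and> {a, b} \<in> F)"

text \<open>Orientations with strengths: (u, v, s) means the edge {u,v} is oriented from u to v
  and has strength s.\<close>

definition orient_at :: "complex set set \<Rightarrow> complex list \<Rightarrow> complex \<Rightarrow> (complex \<times> complex \<times> nat) set" where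
  "orient_at F cs v3 =
     {(u, v3, 1) | u. {u, v3} \<in> F \<and> (succ_on cs u v3 \<or> succ_on cs v3 u)} \<union>
     {(v3, u, 2) | u. {u, v3} \<in> F \<and> \<not> (succ_on cs u v3 \<or> succ_on cs v3 u)}"

text \<open>run gam W F v1 v2 D: some run of the procedure on the near triangulation (W, F)
  with distinguished vertices v1, v2 orients (with strengths) the edges other than v1v2
  as recorded in D.  Nondeterminism: the choice of the chord.\<close>

inductive run :: "drawing \<Rightarrow> complex set \<Rightarrow> complex set set \<Rightarrow> complex \<Rightarrow> complex \<Rightarrow>
    (complex \<times> complex \<times> nat) set \<Rightarrow> bool" for gam where
  chord: "\<lbrakk> near_triangulation gam W F; outer_cycle gam W F cs; succ_on cs v1 v2;
      rotate k cs = a # p @ b # q; p \<noteq> []; q \<noteq> []; {a, b} \<in> F;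
      (C1, C2) \<in> {(a # p @ [b], b # q @ [a]), (b # q @ [a], a # p @ [b])};
      v1 \<in> set C1; v2 \<in> set C1;
      run gam (disk_V gam W C1) (disk_E gam F C1) v1 v2 D1;
      {x, y} = {a, b};
      run gam (disk_V gam W C2) (disk_E gam F C2) x y D2 \<rbrakk>
    \<Longrightarrow> run gam W F v1 v2 (D1 \<union> D2)"
| orient_last: "\<lbrakk> near_triangulation gam W F; outer_cycle gam W F cs; succ_on cs v1 v2;
      \<not> has_chord F cs; succ_on cs v2 v3; W - {v3} = {v1, v2} \<rbrakk>
    \<Longrightarrow> run gam W F v1 v2 (orient_at F cs v3)"
| orient_rec: "\<lbrakk> near_triangulation gam W F; outer_cycle gam W F cs; succ_on cs v1 v2;
      \<not> has_chord F cs; succ_on cs v2 v3; W - {v3} \<noteq> {v1, v2};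
      run gam (W - {v3}) {e \<in> F. v3 \<notin> e} v1 v2 D' \<rbrakk>
    \<Longrightarrow> run gam W F v1 v2 (orient_at F cs v3 \<union> D')"

end

theory Submission
  imports Defs
begin

text \<open>
  By induction over runs we show that no arc of the constructed orientation enters v1 or v2 and
  that, for either orientation of the edge v1v2, no directed triangle is clockwise.

  When v3 is removed, the recursive call orients no edge at v3, and the only arcs into v3 come from
  its two neighbours v2 and w on the outer cycle. A directed triangle v3 b c therefore has c = v2 or
  c = w. If c = v2, the arc from b to v2 would enter v2. If c = w, the clockwise triangle w v3 b
  runs along the outer edge v3 w against the clockwise outer cycle. Replacing that edge of the outer
  cycle by the path v3 b w gives a closed walk whose winding number is the sum of the winding
  numbers of the two cycles: -2 inside the triangle and 0 outside the outer cycle. Both regions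
  accumulate at an interior point of the edge v3 w, which the walk avoids, a contradiction.

  When the outer cycle has a chord, the two closed disks it bounds meet only in the chord (Jordan
  curve theorem for theta graphs). So a directed triangle has its edges in one of the two parts,
  where the induction hypothesis applies, the chord being the base edge of the second part.
\<close>

section \<open>Walks and cycles as vertex lists\<close>

definition walk_edges :: "'a list \<Rightarrow> ('a \<times> 'a) list" where
  "walk_edges xs = zip xs (tl xs)"

definition cycle_edges :: "'a list \<Rightarrow> ('a \<times> 'a) list" where
  "cycle_edges cs = walk_edges (cs @ [hd cs])"

lemma walk_edges_simps [simp]:
  "walk_edges [] = []" "walk_edges [x] = []" "walk_edges (x # y # ys) = (x, y) # walk_edges (y # ys)"
  by (simp_all add: walk_edges_def)

lemma walk_edges_snoc: "xs \<noteq> [] \<Longrightarrow> walk_edges (xs @ [y]) = walk_edges xs @ [(last xs, y)]"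
  by (induction xs rule: induct_list012) auto

lemma walk_edges_append: "walk_edges (xs @ y # ys) = walk_edges (xs @ [y]) @ walk_edges (y # ys)"
  by (induction xs rule: induct_list012) auto

lemma set_walk_edges_conv_nth: "set (walk_edges xs) = {(xs ! i, xs ! Suc i) | i. Suc i < length xs}"
  by (auto simp: walk_edges_def set_zip nth_tl)

lemma walk_edges_in_set: "(u, v) \<in> set (walk_edges xs) \<Longrightarrow> u \<in> set xs \<and> v \<in> set xs"
  by (auto simp: set_walk_edges_conv_nth)

lemma set_walk_edges_rev: "set (walk_edges (rev xs)) = prod.swap ` set (walk_edges xs)"
proof (induction xs rule: induct_list012)
  case (3 x y zs)
  have "walk_edges (rev (x # y # zs)) = walk_edges (rev (y # zs)) @ [(y, x)]"
    using walk_edges_snoc[of "rev (y # zs)" x] by simp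
  then show ?case using "3.IH"(2) by auto
qed auto

lemma walk_edges_ne_ends:
  assumes "distinct xs" "3 \<le> length xs" "(u, v) \<in> set (walk_edges xs)"
  shows "{u, v} \<noteq> {hd xs, last xs}"
proof
  assume uv: "{u, v} = {hd xs, last xs}"
  define n where "n = length xs"
  obtain i where i: "Suc i < n" "u = xs ! i" "v = xs ! Suc i"
    using assms(3) by (auto simp: set_walk_edges_conv_nth n_def)
  have "xs \<noteq> []" using assms(2) by auto
  then have ends: "hd xs = xs ! 0" "last xs = xs ! (n - 1)"
    by (simp_all add: hd_conv_nth last_conv_nth n_def)
  have idx: "xs ! j = xs ! k \<longleftrightarrow> j = k" if "j < n" "k < n" for j k
    using assms(1) that by (simp add: nth_eq_iff_index_eq n_def)
  from uv consider "u = hd xs" "v = last xs" | "u = last xs" "v = hd xs"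
    by (auto simp: doubleton_eq_iff)
  then show False
  proof cases
    case 1
    then have "i = 0" "Suc i = n - 1" using i idx unfolding ends by auto
    then show False using assms(2) unfolding n_def by simp
  next
    case 2
    then have "i = n - 1" using i idx unfolding ends by auto
    then show False using i by simp
  qed
qed

lemma cycle_edges_conv_walk_edges: "cs \<noteq> [] \<Longrightarrow> cycle_edges cs = walk_edges cs @ [(last cs, hd cs)]"
  by (simp add: cycle_edges_def walk_edges_snoc)

lemma set_cycle_edges_conv_nth:
  assumes "cs \<noteq> []"
  shows "set (cycle_edges cs) = {(cs ! i, cs ! (Suc i mod length cs)) | i. i < length cs}"
proof -
  have "((cs @ [hd cs]) ! i, (cs @ [hd cs]) ! Suc i) = (cs ! i, cs ! (Suc i mod length cs))"
    if "i < length cs" for i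
    using that assms by (cases "Suc i = length cs") (auto simp: nth_append hd_conv_nth)
  then have "(\<lambda>i. ((cs @ [hd cs]) ! i, (cs @ [hd cs]) ! Suc i)) ` {..<length cs} =
      (\<lambda>i. (cs ! i, cs ! (Suc i mod length cs))) ` {..<length cs}"
    by (intro image_cong) auto
  then show ?thesis
    unfolding cycle_edges_def set_walk_edges_conv_nth by (auto simp: image_iff)
qed

lemma succ_on_iff_cycle_edges: "cs \<noteq> [] \<Longrightarrow> succ_on cs u v \<longleftrightarrow> (u, v) \<in> set (cycle_edges cs)"
  by (auto simp: set_cycle_edges_conv_nth succ_on_def)

lemma cycle_edges_rotate: "cycle_edges (rotate n cs) = rotate n (cycle_edges cs)"
proof (induction n)
  case (Suc n)
  have "cycle_edges (rotate1 xs) = rotate1 (cycle_edges xs)" for xs :: "'a list"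
  proof (cases xs rule: remdups_adj.cases)
    case (3 x y ys)
    have "walk_edges ((y # ys @ [x]) @ [y]) = walk_edges (y # ys @ [x]) @ [(x, y)]"
      using walk_edges_snoc[of "y # ys @ [x]" y] by simp
    then show ?thesis using 3 by (simp add: cycle_edges_def)
  qed (auto simp: cycle_edges_def)
  then show ?case using Suc by simp
qed simp

lemma sum_list_rotate: "sum_list (rotate n xs) = (sum_list xs :: 'a :: comm_monoid_add)"
  by (metis add.commute append_take_drop_id rotate_drop_take sum_list_append)

lemma is_cycle_iff_cycle_edges:
  "is_cycle F cs \<longleftrightarrow> distinct cs \<and> 3 \<le> length cs \<and> (\<forall>(u, v) \<in> set (cycle_edges cs). {u, v} \<in> F)"
  by (cases "cs = []") (auto simp: is_cycle_def set_cycle_edges_conv_nth)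

lemma is_cycle_not_Nil: "is_cycle F cs \<Longrightarrow> cs \<noteq> []"
  by (auto simp: is_cycle_def)

lemma cycle_edge_in_graph: "is_cycle F cs \<Longrightarrow> (u, v) \<in> set (cycle_edges cs) \<Longrightarrow> {u, v} \<in> F"
  by (auto simp: is_cycle_iff_cycle_edges)

lemma is_cycle_rotate: "is_cycle F (rotate n cs) \<longleftrightarrow> is_cycle F cs"
  by (simp add: is_cycle_iff_cycle_edges cycle_edges_rotate)

lemma succ_on_nth:
  assumes "distinct cs" "i < length cs" "succ_on cs (cs ! i) v"
  shows "v = cs ! (Suc i mod length cs)"
  using assms by (auto simp: succ_on_def nth_eq_iff_index_eq)

lemma Suc_mod_inj: "i < n \<Longrightarrow> j < n \<Longrightarrow> Suc i mod n = Suc j mod n \<Longrightarrow> i = j"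
  by (auto simp: mod_Suc split: if_splits)

lemma succ_on_unique_pred:
  assumes "distinct cs" "succ_on cs u v" "succ_on cs u' v"
  shows "u = u'"
proof -
  obtain i j where "i < length cs" "j < length cs" "u = cs ! i" "u' = cs ! j"
    "cs ! (Suc i mod length cs) = cs ! (Suc j mod length cs)"
    using assms(2,3) unfolding succ_on_def by auto
  moreover have "Suc i mod length cs < length cs" "Suc j mod length cs < length cs"
    by (rule mod_less_divisor, use \<open>i < length cs\<close> in linarith)+
  ultimately show ?thesis using assms(1) Suc_mod_inj by (metis nth_eq_iff_index_eq)
qed

lemma succ_on_succ_nth:
  assumes "distinct cs" "succ_on cs v1 v2" "succ_on cs v2 v3"
  obtains i where "i < length cs" "v1 = cs ! i" "v2 = cs ! (Suc i mod length cs)"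
    "v3 = cs ! (Suc (Suc i) mod length cs)"
proof -
  obtain i where i: "i < length cs" "v1 = cs ! i" "v2 = cs ! (Suc i mod length cs)"
    using assms(2) unfolding succ_on_def by auto
  moreover have "Suc i mod length cs < length cs" by (rule mod_less_divisor) (use i(1) in linarith)
  then have "v3 = cs ! (Suc (Suc i mod length cs) mod length cs)"
    using succ_on_nth[OF assms(1)] assms(3) i(3) by blast
  then have "v3 = cs ! (Suc (Suc i) mod length cs)" by (simp add: mod_Suc_eq)
  ultimately show thesis using that by blast
qed

lemma succ_on_distinct3:
  assumes "distinct cs" "3 \<le> length cs" "succ_on cs v1 v2" "succ_on cs v2 v3"
  shows "distinct [v1, v2, v3]"
proof -
  define n where "n = length cs"
  obtain i where i: "i < n" "v1 = cs ! i" "v2 = cs ! (Suc i mod n)" "v3 = cs ! (Suc (Suc i) mod n)"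
    using succ_on_succ_nth[OF assms(1,3,4)] unfolding n_def by metis
  have "distinct [i, Suc i mod n, Suc (Suc i) mod n]"
    using i(1) assms(2) unfolding n_def by (auto simp: mod_Suc)
  moreover have "Suc i mod n < n" "Suc (Suc i) mod n < n" using i(1) by simp_all
  ultimately show ?thesis using i assms(1) unfolding n_def by (auto simp: nth_eq_iff_index_eq)
qed

lemma chordless_skip_edge:
  assumes cyc: "is_cycle F cs" and nc: "\<not> has_chord F cs"
    and "succ_on cs v1 v2" "succ_on cs v2 v3" "{v1, v3} \<in> F"
  shows "succ_on cs v3 v1"
proof -
  define n where "n = length cs"
  have d: "distinct cs" and n3: "3 \<le> n" using cyc unfolding is_cycle_def n_def by auto
  obtain i where i: "i < n" "v1 = cs ! i" "v2 = cs ! (Suc i mod n)" "v3 = cs ! (Suc (Suc i) mod n)"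
    using succ_on_succ_nth[OF d assms(3,4)] unfolding n_def by metis
  show ?thesis
  proof (cases "n = 3")
    case True
    then have "Suc (Suc (Suc i) mod n) mod n = i" using i(1) by (simp add: mod_Suc_eq)
    moreover have "Suc (Suc i) mod n < n" using i(1) by simp
    ultimately show ?thesis using i unfolding succ_on_def n_def
      by (intro exI[of _ "Suc (Suc i) mod length cs"]) simp
  next
    case False
    define r where "r = rotate i cs"
    have "r ! j = cs ! ((i + j) mod n)" if "j < n" for j
      using that i(1) unfolding r_def n_def by (simp add: nth_rotate)
    then have "r ! 0 = v1" "r ! 1 = v2" "r ! 2 = v3" using i n3 by (simp_all add: mod_Suc_eq)
    moreover have "length r = n" unfolding r_def n_def by simp
    moreover have "r = r ! 0 # r ! 1 # r ! 2 # drop 3 r" if "3 \<le> length r"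
      using that by (cases r; cases "tl r"; cases "tl (tl r)") auto
    ultimately have "r = v1 # [v2] @ v3 # drop 3 r" "drop 3 r \<noteq> []"
      using n3 False by auto
    then have "has_chord F cs" using assms(5) unfolding has_chord_def r_def by blast
    then show ?thesis using nc by simp
  qed
qed

lemma rotate_to_edge:
  assumes "succ_on cs v w"
  obtains n where "hd (rotate n cs) = w" "last (rotate n cs) = v"
proof -
  obtain i where i: "i < length cs" "cs ! i = v" "cs ! (Suc i mod length cs) = w"
    using assms unfolding succ_on_def by auto
  then have ne: "rotate (Suc i) cs \<noteq> []" by auto
  have hd: "hd (rotate (Suc i) cs) = w" using i by (subst hd_rotate_conv_nth) auto
  have "Suc i + (length cs - 1) = i + length cs" using i(1) by simp
  then have k: "(Suc i + (length cs - 1)) mod length cs = i" using i(1) by simp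
  have "last (rotate (Suc i) cs) = cs ! ((Suc i + (length cs - 1)) mod length cs)"
    using ne i(1) by (simp add: last_conv_nth nth_rotate del: rotate_Suc)
  then have "last (rotate (Suc i) cs) = v" by (simp only: k i(2))
  with hd show thesis by (rule that)
qed

definition is_walk :: "'a set set \<Rightarrow> 'a list \<Rightarrow> bool" where
  "is_walk F xs \<longleftrightarrow> 2 \<le> length xs \<and> (\<forall>(u, v) \<in> set (walk_edges xs). {u, v} \<in> F)"

lemma is_walk_simps [simp]:
  "is_walk F [u, v] \<longleftrightarrow> {u, v} \<in> F"
  "is_walk F (u # v # w # xs) \<longleftrightarrow> {u, v} \<in> F \<and> is_walk F (v # w # xs)"
  by (auto simp: is_walk_def)

lemma is_walk_rev: "is_walk F xs \<Longrightarrow> is_walk F (rev xs)"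
  by (auto simp: is_walk_def set_walk_edges_rev insert_commute)

lemma cycle_closed_walk: "is_cycle F cs \<Longrightarrow> is_walk F (cs @ [hd cs])"
  by (auto simp: is_walk_def is_cycle_iff_cycle_edges cycle_edges_def)

lemma cycle_is_walk:
  assumes "is_cycle F cs" shows "is_walk F cs"
proof -
  have "set (walk_edges cs) \<subseteq> set (cycle_edges cs)"
    using cycle_edges_conv_walk_edges[OF is_cycle_not_Nil[OF assms]] by auto
  moreover have "2 \<le> length cs" using assms by (simp add: is_cycle_def)
  ultimately show ?thesis using cycle_edge_in_graph[OF assms] unfolding is_walk_def by auto
qed

lemma cycle_closing_edge:
  assumes "is_cycle F cs" shows "{last cs, hd cs} \<in> F"
proof -
  have "(last cs, hd cs) \<in> set (cycle_edges cs)"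
    using cycle_edges_conv_walk_edges[OF is_cycle_not_Nil[OF assms]] by simp
  then show ?thesis by (rule cycle_edge_in_graph[OF assms])
qed

lemma is_triangle_imp_is_cycle: "is_triangle F a b c \<Longrightarrow> is_cycle F [a, b, c]"
  by (auto simp: is_triangle_def is_cycle_iff_cycle_edges cycle_edges_def insert_commute)

lemma is_triangle_rotate: "is_triangle F a b c \<Longrightarrow> is_triangle F b c a"
  unfolding is_triangle_def by auto

lemma chord_split_cycle:
  assumes cyc: "is_cycle F cs" and rk: "rotate k cs = a # p @ b # q"
    and "p \<noteq> []" "q \<noteq> []" and ab: "{a, b} \<in> F"
  shows "is_cycle F (a # p @ [b])" "is_cycle F (b # q @ [a])"
    "set (cycle_edges cs) = set (walk_edges (a # p @ [b])) \<union> set (walk_edges (b # q @ [a]))"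
    "set (a # p @ [b]) \<inter> set (b # q @ [a]) = {a, b}"
proof -
  have "cycle_edges (rotate k cs) = walk_edges ((a # p) @ b # (q @ [a]))"
    unfolding rk cycle_edges_def by simp
  also have "\<dots> = walk_edges (a # p @ [b]) @ walk_edges (b # q @ [a])"
    by (subst walk_edges_append) simp
  finally show edges: "set (cycle_edges cs) = set (walk_edges (a # p @ [b])) \<union> set (walk_edges (b # q @ [a]))"
    by (metis cycle_edges_rotate set_append set_rotate)
  have "distinct (rotate k cs)" using cyc by (simp add: is_cycle_def)
  then have d: "distinct (a # p @ b # q)" using rk by simp
  then show "set (a # p @ [b]) \<inter> set (b # q @ [a]) = {a, b}" by auto
  have "cycle_edges (a # p @ [b]) = walk_edges (a # p @ [b]) @ [(b, a)]"
    "cycle_edges (b # q @ [a]) = walk_edges (b # q @ [a]) @ [(a, b)]"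
    by (simp_all add: cycle_edges_conv_walk_edges)
  moreover have "{b, a} \<in> F" using ab by (simp add: insert_commute)
  moreover have "3 \<le> length (a # p @ [b])" "3 \<le> length (b # q @ [a])"
    using \<open>p \<noteq> []\<close> \<open>q \<noteq> []\<close> by (auto simp: neq_Nil_conv)
  moreover have "distinct (a # p @ [b])" "distinct (b # q @ [a])" using d by auto
  ultimately show "is_cycle F (a # p @ [b])" "is_cycle F (b # q @ [a])"
    using ab cycle_edge_in_graph[OF cyc] unfolding is_cycle_iff_cycle_edges edges by auto
qed

section \<open>Drawings of walks and cycles\<close>

lemma winding_number_eq_at_common_limit:
  assumes "path P" "pathfinish P = pathstart P" "p \<notin> path_image P"
    and "p \<in> closure S" "\<And>z. z \<in> S \<Longrightarrow> winding_number P z = k"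
    and "p \<in> closure S'" "\<And>z. z \<in> S' \<Longrightarrow> winding_number P z = k'"
  shows "k = k'"
proof -
  have "open (- path_image P)" using closed_path_image[OF assms(1)] by (simp add: open_Compl)
  then obtain e where e: "e > 0" "ball p e \<subseteq> - path_image P"
    using assms(3) open_contains_ball by blast
  have const: "winding_number P constant_on ball p e"
    using assms(1,2) e(2) by (intro winding_number_constant) auto
  have "p \<in> ball p e \<inter> closure S" "p \<in> ball p e \<inter> closure S'" using assms(4,6) e(1) by simp_all
  then obtain z z' where z: "z \<in> ball p e" "z \<in> S" and z': "z' \<in> ball p e" "z' \<in> S'"
    using open_Int_closure_eq_empty[of "ball p e"] by blast
  have "winding_number P z = winding_number P z'"
    using const z(1) z'(1) unfolding constant_on_def by auto
  then show ?thesis using assms(5)[OF z(2)] assms(7)[OF z'(2)] by simp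
qed

lemma arc_interior_point:
  assumes "arc g" obtains m where "m \<in> path_image g" "m \<noteq> pathstart g" "m \<noteq> pathfinish g"
proof
  have inj: "inj_on g {0..1}" using assms by (simp add: arc_def)
  have "g (1/2) \<noteq> g 0" "g (1/2) \<noteq> g 1"
    using inj_onD[OF inj, of "1/2" 0] inj_onD[OF inj, of "1/2" 1] by auto
  then show "g (1/2) \<noteq> pathstart g" "g (1/2) \<noteq> pathfinish g"
    unfolding pathstart_def pathfinish_def by auto
  show "g (1/2) \<in> path_image g" by (auto simp: path_image_def)
qed

lemma plane_graph_edge:
  assumes pg: "plane_graph gam W F" and e: "{u, v} \<in> F"
  shows "u \<noteq> v" "u \<in> W" "v \<in> W" "arc (gam u v)" "pathstart (gam u v) = u"
    "pathfinish (gam u v) = v" "gam v u = reversepath (gam u v)" "path_image (gam u v) \<inter> W = {u, v}"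
proof -
  show uv: "u \<noteq> v" "u \<in> W" "v \<in> W"
    using pg e unfolding plane_graph_def by (metis doubleton_eq_iff)+
  show "arc (gam u v)" "pathstart (gam u v) = u" "pathfinish (gam u v) = v"
    "gam v u = reversepath (gam u v)" "path_image (gam u v) \<inter> W = {u, v}"
    using pg e uv(1) unfolding plane_graph_def by blast+
qed

lemma plane_graph_edges_meet:
  assumes "plane_graph gam W F" "{u, v} \<in> F" "{x, y} \<in> F" "{u, v} \<noteq> {x, y}"
  shows "path_image (gam u v) \<inter> path_image (gam x y) \<subseteq> {u, v} \<inter> {x, y}"
  using assms unfolding plane_graph_def by blast

lemma plane_graph_path_image_swap:
  "plane_graph gam W F \<Longrightarrow> {u, v} \<in> F \<Longrightarrow> path_image (gam v u) = path_image (gam u v)"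
  by (simp add: plane_graph_edge(7))

lemma plane_graph_ends_in_path_image:
  "plane_graph gam W F \<Longrightarrow> {u, v} \<in> F \<Longrightarrow> u \<in> path_image (gam u v) \<and> v \<in> path_image (gam u v)"
  by (metis plane_graph_edge(5,6) pathstart_in_path_image pathfinish_in_path_image)

lemma walk_induct [case_names Nil Single Edge Cons]:
  "P [] \<Longrightarrow> (\<And>u. P [u]) \<Longrightarrow> (\<And>u v. P [u, v]) \<Longrightarrow>
    (\<And>u v w rest. P (v # w # rest) \<Longrightarrow> P (u # v # w # rest)) \<Longrightarrow> P xs"
proof (induction xs rule: induct_list012)
  case (3 x y zs)
  then show ?case by (cases zs) auto
qed auto

context
  fixes gam :: drawing and W :: "complex set" and F :: "complex set set"
  assumes pg: "plane_graph gam W F"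
begin

lemma walk_path_ends:
  "is_walk F xs \<Longrightarrow> pathstart (walk_path gam xs) = hd xs \<and> pathfinish (walk_path gam xs) = last xs"
  by (induction xs rule: walk_induct) (auto simp: is_walk_def plane_graph_edge[OF pg])

lemma path_walk_path: "is_walk F xs \<Longrightarrow> path (walk_path gam xs)"
  by (induction xs rule: walk_induct)
    (auto simp: is_walk_def arc_imp_path walk_path_ends plane_graph_edge[OF pg])

lemma path_image_walk_path:
  "is_walk F xs \<Longrightarrow> path_image (walk_path gam xs) = (\<Union>(u, v) \<in> set (walk_edges xs). path_image (gam u v))"
proof (induction xs rule: walk_induct)
  case (Cons u v w rest)
  then show ?case
    using walk_path_ends[of "v # w # rest"] by (simp add: path_image_join plane_graph_edge[OF pg])
qed (auto simp: is_walk_def)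

lemma winding_number_walk_path:
  "is_walk F xs \<Longrightarrow> z \<notin> path_image (walk_path gam xs) \<Longrightarrow>
    winding_number (walk_path gam xs) z = (\<Sum>(u, v) \<leftarrow> walk_edges xs. winding_number (gam u v) z)"
proof (induction xs rule: walk_induct)
  case (Cons u v w rest)
  then show ?case
    using walk_path_ends[of "v # w # rest"] path_walk_path[of "v # w # rest"]
    by (simp add: path_image_join winding_number_join arc_imp_path plane_graph_edge[OF pg])
qed (auto simp: is_walk_def)

lemma arc_walk_path: "is_walk F xs \<Longrightarrow> distinct xs \<Longrightarrow> arc (walk_path gam xs)"
proof (induction xs rule: walk_induct)
  case (Cons u v w rest)
  have "path_image (gam u v) \<inter> path_image (gam x y) \<subseteq> {v}"
    if "(x, y) \<in> set (walk_edges (v # w # rest))" for x y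
  proof -
    have "{x, y} \<in> F" "u \<notin> {x, y}"
      using that Cons walk_edges_in_set[OF that] by (auto simp: is_walk_def)
    then show ?thesis
      using plane_graph_edges_meet[OF pg, of u v x y] "Cons.prems" by auto
  qed
  then have "path_image (gam u v) \<inter> path_image (walk_path gam (v # w # rest)) \<subseteq> {v}"
    using path_image_walk_path[of "v # w # rest"] "Cons.prems" by auto
  then show ?case
    using Cons walk_path_ends[of "v # w # rest"] by (simp add: arc_join plane_graph_edge[OF pg])
qed (auto simp: is_walk_def plane_graph_edge[OF pg])

lemma walk_image_meet_closing_edge:
  assumes w: "is_walk F xs" and d: "distinct xs" "3 \<le> length xs"
    and e: "{hd xs, last xs} \<in> F"
  shows "path_image (walk_path gam xs) \<inter> path_image (gam (hd xs) (last xs)) \<subseteq> {hd xs, last xs}"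
proof -
  have "path_image (gam u v) \<inter> path_image (gam (hd xs) (last xs)) \<subseteq> {hd xs, last xs}"
    if uv: "(u, v) \<in> set (walk_edges xs)" for u v
  proof -
    have "{u, v} \<in> F" using w uv by (auto simp: is_walk_def)
    then show ?thesis using plane_graph_edges_meet[OF pg _ e] walk_edges_ne_ends[OF d uv] by blast
  qed
  then show ?thesis unfolding path_image_walk_path[OF w] by blast
qed

lemma walk_images_meet:
  assumes wA: "is_walk F A" and wB: "is_walk F B" and d: "distinct A" "3 \<le> length A"
    and AB: "set A \<inter> set B \<subseteq> {hd A, last A}"
  shows "path_image (walk_path gam A) \<inter> path_image (walk_path gam B) \<subseteq> {hd A, last A}"
proof -
  have "path_image (gam u v) \<inter> path_image (gam x y) \<subseteq> {hd A, last A}"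
    if uv: "(u, v) \<in> set (walk_edges A)" and xy: "(x, y) \<in> set (walk_edges B)" for u v x y
  proof -
    have F: "{u, v} \<in> F" "{x, y} \<in> F" using wA wB uv xy by (auto simp: is_walk_def)
    have shared: "{u, v} \<inter> {x, y} \<subseteq> {hd A, last A}"
      using walk_edges_in_set[OF uv] walk_edges_in_set[OF xy] AB by blast
    have "{u, v} \<noteq> {x, y}"
    proof
      assume "{u, v} = {x, y}"
      then have "{u, v} = {hd A, last A}"
        using shared plane_graph_edge(1)[OF pg F(1)] by (auto simp: doubleton_eq_iff)
      then show False using walk_edges_ne_ends[OF d uv] by simp
    qed
    then show ?thesis using plane_graph_edges_meet[OF pg F] shared by blast
  qed
  then show ?thesis unfolding path_image_walk_path[OF wA] path_image_walk_path[OF wB] by blast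
qed

lemma path_cycle_path: "is_cycle F cs \<Longrightarrow> path (cycle_path gam cs)"
  unfolding cycle_path_def by (intro path_walk_path cycle_closed_walk)

lemma cycle_path_ends:
  "is_cycle F cs \<Longrightarrow> pathstart (cycle_path gam cs) = hd cs \<and> pathfinish (cycle_path gam cs) = hd cs"
  using walk_path_ends[OF cycle_closed_walk] is_cycle_not_Nil unfolding cycle_path_def by simp

lemma path_image_cycle_path:
  "is_cycle F cs \<Longrightarrow>
    path_image (cycle_path gam cs) = (\<Union>(u, v) \<in> set (cycle_edges cs). path_image (gam u v))"
  unfolding cycle_path_def cycle_edges_def by (intro path_image_walk_path cycle_closed_walk)

lemma winding_number_cycle_path:
  "is_cycle F cs \<Longrightarrow> z \<notin> path_image (cycle_path gam cs) \<Longrightarrow>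
    winding_number (cycle_path gam cs) z = (\<Sum>(u, v) \<leftarrow> cycle_edges cs. winding_number (gam u v) z)"
  unfolding cycle_path_def cycle_edges_def by (intro winding_number_walk_path cycle_closed_walk)

lemma simple_path_cycle_path:
  assumes cyc: "is_cycle F cs"
  shows "simple_path (cycle_path gam cs)"
proof -
  have "3 \<le> length cs" using cyc by (simp add: is_cycle_def)
  then obtain c0 c1 rest where cs: "cs = c0 # c1 # rest" and "rest \<noteq> []"
    by (cases cs; cases "tl cs") (auto simp: Suc_le_length_iff)
  define ws where "ws = c1 # rest @ [c0]"
  have ws_walk: "is_walk F ws" and dws: "distinct ws" and lws: "3 \<le> length ws"
    using cycle_closed_walk[OF cyc] cyc \<open>rest \<noteq> []\<close> unfolding cs ws_def is_cycle_def
    by (auto simp: is_walk_def Suc_le_eq)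
  have e01: "{c0, c1} \<in> F" using cycle_closed_walk[OF cyc] unfolding cs by (simp add: is_walk_def)
  have "path_image (walk_path gam ws) \<inter> path_image (gam c1 c0) \<subseteq> {c1, c0}"
    using walk_image_meet_closing_edge[OF ws_walk dws lws] e01 by (simp add: ws_def insert_commute)
  then have meet: "path_image (gam c0 c1) \<inter> path_image (walk_path gam ws) \<subseteq> {c0, c1}"
    using plane_graph_path_image_swap[OF pg e01] by auto
  have "cycle_path gam cs = gam c0 c1 +++ walk_path gam ws"
    using \<open>rest \<noteq> []\<close> unfolding cs ws_def cycle_path_def by (cases rest) auto
  moreover have "simple_path (gam c0 c1 +++ walk_path gam ws)"
  proof (rule simple_path_join_loop)
    show "arc (gam c0 c1)" by (rule plane_graph_edge(4)[OF pg e01])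
    show "arc (walk_path gam ws)" by (rule arc_walk_path[OF ws_walk dws])
    show "pathfinish (gam c0 c1) = pathstart (walk_path gam ws)"
      "pathfinish (walk_path gam ws) = pathstart (gam c0 c1)"
      using walk_path_ends[OF ws_walk] plane_graph_edge(5,6)[OF pg e01] by (simp_all add: ws_def)
    show "path_image (gam c0 c1) \<inter> path_image (walk_path gam ws) \<subseteq>
        {pathstart (gam c0 c1), pathstart (walk_path gam ws)}"
      using meet walk_path_ends[OF ws_walk] plane_graph_edge(5)[OF pg e01] by (simp add: ws_def)
  qed
  ultimately show ?thesis by simp
qed

lemma path_image_cycle_path_rotate:
  "is_cycle F cs \<Longrightarrow> path_image (cycle_path gam (rotate n cs)) = path_image (cycle_path gam cs)"
  by (simp add: path_image_cycle_path is_cycle_rotate cycle_edges_rotate)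

lemma winding_number_cycle_path_rotate:
  assumes "is_cycle F cs" "z \<notin> path_image (cycle_path gam cs)"
  shows "winding_number (cycle_path gam (rotate n cs)) z = winding_number (cycle_path gam cs) z"
proof -
  have "z \<notin> path_image (cycle_path gam (rotate n cs))"
    using assms path_image_cycle_path_rotate by simp
  then show ?thesis
    using assms winding_number_cycle_path is_cycle_rotate
    by (simp add: cycle_edges_rotate sum_list_rotate flip: rotate_map)
qed

lemma path_image_walk_path_rev:
  assumes w: "is_walk F xs"
  shows "path_image (walk_path gam (rev xs)) = path_image (walk_path gam xs)"
proof -
  have "path_image (walk_path gam (rev xs)) = (\<Union>(u, v) \<in> set (walk_edges xs). path_image (gam v u))"
    unfolding path_image_walk_path[OF is_walk_rev[OF w]] set_walk_edges_rev by auto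
  also have "\<dots> = path_image (walk_path gam xs)"
    unfolding path_image_walk_path[OF w]
    using w plane_graph_path_image_swap[OF pg] by (intro SUP_cong) (auto simp: is_walk_def)
  finally show ?thesis .
qed

lemma path_image_cycle_path_conv_walk:
  assumes "is_cycle F cs"
  shows "path_image (cycle_path gam cs) = path_image (walk_path gam cs) \<union> path_image (gam (hd cs) (last cs))"
  using path_image_cycle_path[OF assms] cycle_closing_edge[OF assms] is_cycle_not_Nil[OF assms]
    path_image_walk_path[OF cycle_is_walk[OF assms]] plane_graph_path_image_swap[OF pg]
  by (auto simp: cycle_edges_conv_walk_edges)

end

lemma clockwise_rotate:
  assumes pg: "plane_graph gam W F" and cyc: "is_cycle F cs" and cw: "clockwise gam cs"
  shows "clockwise gam (rotate n cs)"
  unfolding clockwise_def path_image_cycle_path_rotate[OF pg cyc]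
proof
  fix z assume z: "z \<in> inside (path_image (cycle_path gam cs))"
  then have "z \<notin> path_image (cycle_path gam cs)" using inside_no_overlap by blast
  then show "winding_number (cycle_path gam (rotate n cs)) z = -1"
    using winding_number_cycle_path_rotate[OF pg cyc] cw z unfolding clockwise_def by simp
qed

section \<open>The outer cycle\<close>

context
  fixes gam :: drawing and W :: "complex set" and F :: "complex set set"
  assumes pg: "plane_graph gam W F"
begin

lemma edge_image_subset_drawn: "{u, v} \<in> F \<Longrightarrow> path_image (gam u v) \<subseteq> drawn gam W F"
  unfolding drawn_def using plane_graph_edge(1)[OF pg] by blast

lemma cycle_image_subset_drawn:
  assumes "is_cycle F cs" shows "path_image (cycle_path gam cs) \<subseteq> drawn gam W F"
  using assms edge_image_subset_drawn
  unfolding path_image_cycle_path[OF pg assms] is_cycle_iff_cycle_edges by fast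

lemma compact_drawn: "compact (drawn gam W F)"
proof -
  have fin: "finite W" using pg by (simp add: plane_graph_def)
  have "{path_image (gam u v) | u v. {u, v} \<in> F \<and> u \<noteq> v} \<subseteq> (\<lambda>(u, v). path_image (gam u v)) ` (W \<times> W)"
    using plane_graph_edge(2,3)[OF pg] by fast
  then have "finite {path_image (gam u v) | u v. {u, v} \<in> F \<and> u \<noteq> v}"
    using fin by (meson finite_SigmaI finite_imageI finite_subset)
  moreover have "compact (path_image (gam u v))" if "{u, v} \<in> F" for u v
    using plane_graph_edge(4)[OF pg that] by (simp add: arc_imp_path compact_path_image)
  ultimately have "compact (\<Union>{path_image (gam u v) | u v. {u, v} \<in> F \<and> u \<noteq> v})"
    by (intro compact_Union) auto
  then show ?thesis unfolding drawn_def using fin by (simp add: compact_Un finite_imp_compact)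
qed

context
  fixes cs :: "complex list"
  assumes oc: "outer_cycle gam W F cs"
begin

lemma frontier_outside_drawn: "frontier (outside (drawn gam W F)) = path_image (cycle_path gam cs)"
proof -
  have bD: "bounded (drawn gam W F)" by (rule compact_imp_bounded[OF compact_drawn])
  have "outside (drawn gam W F) \<in> faces gam W F" "\<not> bounded (outside (drawn gam W F))"
    using bounded_unique_outside[OF bD] unfolding faces_def by auto
  then show ?thesis using oc unfolding outer_cycle_def by blast
qed

lemma outside_outer_cycle: "outside (path_image (cycle_path gam cs)) = outside (drawn gam W F)"
proof -
  define G where "G = path_image (cycle_path gam cs)"
  define Out where "Out = outside (drawn gam W F)"
  have cyc: "is_cycle F cs" using oc by (simp add: outer_cycle_def)
  have bD: "bounded (drawn gam W F)" by (rule compact_imp_bounded[OF compact_drawn])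
  have GD: "G \<subseteq> drawn gam W F" unfolding G_def by (rule cycle_image_subset_drawn[OF cyc])
  have OG: "Out \<subseteq> outside G" unfolding Out_def by (rule outside_mono[OF GD])
  have "outside G - Out = {}"
  proof (rule ccontr)
    assume "outside G - Out \<noteq> {}"
    moreover have "connected (outside G)"
      using bD GD bounded_subset by (intro connected_outside) auto
    moreover have "outside G \<inter> Out \<noteq> {}"
      using OG outside_bounded_nonempty[OF bD] unfolding Out_def by blast
    ultimately have "outside G \<inter> frontier Out \<noteq> {}" using connected_Int_frontier by blast
    then show False using frontier_outside_drawn unfolding G_def Out_def by auto
  qed
  then show ?thesis using OG unfolding G_def Out_def by blast
qed

lemma frontier_outside_outer_cycle:
  "frontier (outside (path_image (cycle_path gam cs))) = path_image (cycle_path gam cs)"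
  by (simp add: outside_outer_cycle frontier_outside_drawn)

lemma outside_outer_cycle_subset: "S \<subseteq> drawn gam W F \<Longrightarrow> outside (path_image (cycle_path gam cs)) \<subseteq> outside S"
  unfolding outside_outer_cycle by (rule outside_mono)

lemma inside_subset_inside_outer_cycle:
  assumes "closed S" "S \<subseteq> drawn gam W F"
  shows "inside S \<subseteq> inside (path_image (cycle_path gam cs))"
proof
  define G where "G = path_image (cycle_path gam cs)"
  fix z assume z: "z \<in> inside S"
  have out: "outside G \<inter> inside S = {}"
    using outside_outer_cycle_subset[OF assms(2)] inside_Int_outside unfolding G_def by blast
  moreover have "z \<notin> G"
  proof
    assume "z \<in> G"
    then have "z \<in> closure (outside G)"
      using frontier_outside_outer_cycle unfolding G_def frontier_def by blast
    then show False
      using z out open_inside[OF assms(1)] open_Int_closure_eq_empty by blast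
  qed
  ultimately show "z \<in> inside G" using z inside_Un_outside by blast
qed

lemma drawn_subset_outer_disk:
  "drawn gam W F \<subseteq> path_image (cycle_path gam cs) \<union> inside (path_image (cycle_path gam cs))"
  using outside_no_overlap[of "drawn gam W F"] unfolding union_with_inside outside_outer_cycle by blast

lemma winding_number_outside_outer_cycle:
  assumes "is_cycle F C" "z \<in> outside (path_image (cycle_path gam cs))"
  shows "winding_number (cycle_path gam C) z = 0"
proof (rule winding_number_zero_in_outside)
  show "path (cycle_path gam C)" "pathfinish (cycle_path gam C) = pathstart (cycle_path gam C)"
    using path_cycle_path[OF pg assms(1)] cycle_path_ends[OF pg assms(1)] by simp_all
  show "z \<in> outside (path_image (cycle_path gam C))"
    using outside_outer_cycle_subset[OF cycle_image_subset_drawn[OF assms(1)]] assms(2) by blast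
qed

end

end

text \<open>
  Let L be a cycle listed from w to v, so that its closing edge is vw. Replacing that edge by the
  path v b w gives the closed walk L @ [b, w]. Its winding number is that of L plus that of the
  triangle w v b, because the triangle traverses the edge vw in the opposite direction.
\<close>

context
  fixes gam :: drawing and W :: "complex set" and F :: "complex set set"
    and L :: "complex list" and v w b :: complex
  assumes pg: "plane_graph gam W F" and cyc: "is_cycle F L" and ends: "hd L = w" "last L = v"
    and vb: "{v, b} \<in> F" and bw: "{b, w} \<in> F"
begin

lemma detour_walk_edges: "walk_edges (L @ [b, w]) = walk_edges L @ [(v, b), (b, w)]"
  using walk_edges_append[of L b "[w]"] walk_edges_snoc[OF is_cycle_not_Nil[OF cyc], of b] ends by simp

lemma detour_is_walk: "is_walk F (L @ [b, w])"
  using cycle_is_walk[OF cyc] vb bw unfolding is_walk_def detour_walk_edges by auto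

lemma detour_closed_path:
  "path (walk_path gam (L @ [b, w]))" "pathfinish (walk_path gam (L @ [b, w])) = pathstart (walk_path gam (L @ [b, w]))"
  using path_walk_path[OF pg detour_is_walk] walk_path_ends[OF pg detour_is_walk] is_cycle_not_Nil[OF cyc] ends
  by simp_all

lemma path_image_detour:
  "path_image (walk_path gam (L @ [b, w])) =
    path_image (walk_path gam L) \<union> path_image (gam v b) \<union> path_image (gam b w)"
  using path_image_walk_path[OF pg detour_is_walk] path_image_walk_path[OF pg cycle_is_walk[OF cyc]]
  unfolding detour_walk_edges by auto

lemma detour_closing_edge: "{v, w} \<in> F" "b \<noteq> v" "b \<noteq> w"
  using cycle_closing_edge[OF cyc] plane_graph_edge(1)[OF pg vb] plane_graph_edge(1)[OF pg bw] ends
  by (auto simp: insert_commute)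

lemma detour_avoids_closing_edge:
  "path_image (walk_path gam (L @ [b, w])) \<inter> path_image (gam v w) \<subseteq> {v, w}"
proof -
  have "distinct L" "3 \<le> length L" using cyc by (simp_all add: is_cycle_def)
  then have "path_image (walk_path gam L) \<inter> path_image (gam w v) \<subseteq> {w, v}"
    using walk_image_meet_closing_edge[OF pg cycle_is_walk[OF cyc]] detour_closing_edge(1) ends
    by (simp add: insert_commute)
  moreover have "path_image (gam v b) \<inter> path_image (gam v w) \<subseteq> {v, w}"
    "path_image (gam b w) \<inter> path_image (gam v w) \<subseteq> {v, w}"
    using plane_graph_edges_meet[OF pg vb detour_closing_edge(1)] plane_graph_edges_meet[OF pg bw detour_closing_edge(1)]
      detour_closing_edge(2,3) by (auto simp: doubleton_eq_iff)
  ultimately show ?thesis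
    unfolding path_image_detour using plane_graph_path_image_swap[OF pg detour_closing_edge(1)] by auto
qed

lemma winding_number_detour:
  assumes zL: "z \<notin> path_image (cycle_path gam L)" and zT: "z \<notin> path_image (cycle_path gam [w, v, b])"
  shows "winding_number (walk_path gam (L @ [b, w])) z =
    winding_number (cycle_path gam L) z + winding_number (cycle_path gam [w, v, b]) z"
proof -
  let ?wn = "\<lambda>u v. winding_number (gam u v) z"
  have cL: "cycle_edges L = walk_edges L @ [(v, w)]"
    using cycle_edges_conv_walk_edges[OF is_cycle_not_Nil[OF cyc]] ends by simp
  have "is_triangle F w v b"
    using detour_closing_edge vb bw plane_graph_edge(1)[OF pg] by (auto simp: is_triangle_def insert_commute)
  note cycT = is_triangle_imp_is_cycle[OF this]
  have zvw: "z \<notin> path_image (gam v w)"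
    using zL path_image_cycle_path[OF pg cyc] cL by auto
  have "z \<notin> path_image (gam v b) \<union> path_image (gam b w)"
    using zT path_image_cycle_path[OF pg cycT] by (auto simp: cycle_edges_def)
  moreover have "z \<notin> path_image (walk_path gam L)"
    using zL path_image_cycle_path[OF pg cyc] path_image_walk_path[OF pg cycle_is_walk[OF cyc]] cL
    by auto
  ultimately have zP: "z \<notin> path_image (walk_path gam (L @ [b, w]))" unfolding path_image_detour by blast
  have wL: "winding_number (cycle_path gam L) z = (\<Sum>(x, y) \<leftarrow> walk_edges L. ?wn x y) + ?wn v w"
    using winding_number_cycle_path[OF pg cyc zL] cL by simp
  have "?wn w v = - ?wn v w"
    using plane_graph_edge(4,7)[OF pg detour_closing_edge(1)] zvw by (simp add: winding_number_reversepath arc_imp_path)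
  then have wT: "winding_number (cycle_path gam [w, v, b]) z = - ?wn v w + ?wn v b + ?wn b w"
    using winding_number_cycle_path[OF pg cycT zT] by (simp add: cycle_edges_def)
  have "winding_number (walk_path gam (L @ [b, w])) z = (\<Sum>(x, y) \<leftarrow> walk_edges L. ?wn x y) + ?wn v b + ?wn b w"
    using winding_number_walk_path[OF pg detour_is_walk zP] unfolding detour_walk_edges by simp
  then show ?thesis using wL wT by simp
qed

end

lemma cycle_detour:
  assumes pg: "plane_graph gam W F" and cyc: "is_cycle F cs"
    and vw: "succ_on cs v w" and vb: "{v, b} \<in> F" and bw: "{b, w} \<in> F"
  obtains P where "path P" "pathfinish P = pathstart P" "path_image P \<inter> path_image (gam v w) \<subseteq> {v, w}"
    "\<And>z. z \<notin> path_image (cycle_path gam cs) \<Longrightarrow> z \<notin> path_image (cycle_path gam [w, v, b]) \<Longrightarrow>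
      winding_number P z = winding_number (cycle_path gam cs) z + winding_number (cycle_path gam [w, v, b]) z"
proof -
  obtain n where ends: "hd (rotate n cs) = w" "last (rotate n cs) = v" by (rule rotate_to_edge[OF vw])
  have cycL: "is_cycle F (rotate n cs)" using cyc by (simp add: is_cycle_rotate)
  show thesis
  proof (rule that[of "walk_path gam (rotate n cs @ [b, w])"])
    show "path (walk_path gam (rotate n cs @ [b, w]))"
      "pathfinish (walk_path gam (rotate n cs @ [b, w])) = pathstart (walk_path gam (rotate n cs @ [b, w]))"
      by (rule detour_closed_path[OF pg cycL ends vb bw])+
    show "path_image (walk_path gam (rotate n cs @ [b, w])) \<inter> path_image (gam v w) \<subseteq> {v, w}"
      by (rule detour_avoids_closing_edge[OF pg cycL ends vb bw])
    fix z assume "z \<notin> path_image (cycle_path gam cs)" "z \<notin> path_image (cycle_path gam [w, v, b])"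
    then show "winding_number (walk_path gam (rotate n cs @ [b, w])) z =
        winding_number (cycle_path gam cs) z + winding_number (cycle_path gam [w, v, b]) z"
      using winding_number_detour[OF pg cycL ends vb bw] path_image_cycle_path_rotate[OF pg cyc]
        winding_number_cycle_path_rotate[OF pg cyc] by simp
  qed
qed

lemma outer_edge_triangle_not_clockwise:
  assumes pg: "plane_graph gam W F" and oc: "outer_cycle gam W F cs"
    and vw: "succ_on cs v w" and vb: "{v, b} \<in> F" and bw: "{b, w} \<in> F"
  shows "\<not> clockwise gam [w, v, b]"
proof
  assume cwT: "clockwise gam [w, v, b]"
  have cyc: "is_cycle F cs" and cwG: "clockwise gam cs" using oc by (simp_all add: outer_cycle_def)
  have vw_edge: "(v, w) \<in> set (cycle_edges cs)" using vw succ_on_iff_cycle_edges is_cycle_not_Nil[OF cyc] by blast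
  then have vwF: "{v, w} \<in> F" by (rule cycle_edge_in_graph[OF cyc])
  have "is_triangle F w v b"
    using vwF vb bw plane_graph_edge(1)[OF pg] by (auto simp: is_triangle_def insert_commute)
  note cycT = is_triangle_imp_is_cycle[OF this]
  define G T where "G = path_image (cycle_path gam cs)" and "T = cycle_path gam [w, v, b]"
  obtain P where P: "path P" "pathfinish P = pathstart P" "path_image P \<inter> path_image (gam v w) \<subseteq> {v, w}"
    and wnP: "\<And>z. z \<notin> G \<Longrightarrow> z \<notin> path_image T \<Longrightarrow>
      winding_number P z = winding_number (cycle_path gam cs) z + winding_number T z"
    using cycle_detour[OF pg cyc vw vb bw] unfolding G_def T_def by metis
  obtain p where p: "p \<in> path_image (gam v w)" "p \<noteq> v" "p \<noteq> w"
    using arc_interior_point plane_graph_edge(4-6)[OF pg vwF] by metis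
  have pP: "p \<notin> path_image P" using P(3) p by blast
  have "p \<in> G" using p(1) vw_edge path_image_cycle_path[OF pg cyc] unfolding G_def by blast
  then have p_out: "p \<in> closure (outside G)"
    using frontier_outside_outer_cycle[OF pg oc] unfolding G_def frontier_def by blast
  have "p \<in> path_image T"
    using p(1) path_image_cycle_path[OF pg cycT] plane_graph_path_image_swap[OF pg vwF]
    unfolding T_def by (auto simp: cycle_edges_def)
  then have p_in: "p \<in> closure (inside (path_image T))"
    using Jordan_inside_outside[OF simple_path_cycle_path[OF pg cycT]] cycle_path_ends[OF pg cycT]
    unfolding T_def frontier_def by auto
  have wn_in: "winding_number P z = -2" if z: "z \<in> inside (path_image T)" for z
  proof -
    have "z \<in> inside G"
      using inside_subset_inside_outer_cycle[OF pg oc closed_path_image cycle_image_subset_drawn[OF pg cycT]]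
        path_cycle_path[OF pg cycT] z unfolding G_def T_def by blast
    then show ?thesis
      using z wnP cwG cwT inside_no_overlap unfolding clockwise_def G_def T_def by fastforce
  qed
  have wn_out: "winding_number P z = 0" if z: "z \<in> outside G" for z
  proof -
    have "z \<in> outside (path_image T)"
      using outside_outer_cycle_subset[OF pg oc cycle_image_subset_drawn[OF pg cycT]] z
      unfolding G_def T_def by blast
    then have "z \<notin> G" "z \<notin> path_image T" using z outside_no_overlap by blast+
    then show ?thesis
      using wnP winding_number_outside_outer_cycle[OF pg oc cyc] winding_number_outside_outer_cycle[OF pg oc cycT] z
      unfolding G_def T_def by simp
  qed
  have "(-2 :: complex) = 0"
    by (rule winding_number_eq_at_common_limit[OF P(1,2) pP p_in wn_in p_out wn_out])
  then show False by simp
qed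

section \<open>Chords\<close>

lemma theta_closed_disks_inter:
  fixes c1 c2 c :: "real \<Rightarrow> complex"
  assumes "simple_path c1" "pathstart c1 = a" "pathfinish c1 = b"
    and "simple_path c2" "pathstart c2 = a" "pathfinish c2 = b"
    and "simple_path c" "pathstart c = a" "pathfinish c = b" "a \<noteq> b"
    and "path_image c1 \<inter> path_image c2 = {a, b}" "path_image c1 \<inter> path_image c = {a, b}"
    and "path_image c2 \<inter> path_image c = {a, b}"
    and "path_image c \<inter> inside (path_image c1 \<union> path_image c2) \<noteq> {}"
  defines "S1 \<equiv> path_image c1 \<union> path_image c" and "S2 \<equiv> path_image c2 \<union> path_image c"
  shows "(S1 \<union> inside S1) \<inter> (S2 \<union> inside S2) \<subseteq> path_image c"
proof -
  obtain disj: "inside S1 \<inter> inside S2 = {}"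
    and split: "inside S1 \<union> inside S2 \<union> (path_image c - {a, b}) = inside (path_image c1 \<union> path_image c2)"
    using split_inside_simple_closed_curve[OF assms(1-14)] unfolding S1_def S2_def by blast
  have "inside (path_image c1 \<union> path_image c2) \<inter> (path_image c1 \<union> path_image c2) = {}"
    by (rule inside_no_overlap)
  then have "inside S1 \<inter> (path_image c1 \<union> path_image c2) = {}" "inside S2 \<inter> (path_image c1 \<union> path_image c2) = {}"
    using split by blast+
  moreover have "{a, b} \<subseteq> path_image c"
    using assms(8,9) pathstart_in_path_image[of c] pathfinish_in_path_image[of c] by simp
  ultimately have "x \<in> path_image c" if "x \<in> S1 \<union> inside S1" "x \<in> S2 \<union> inside S2" for x
    using that disj assms(11) unfolding S1_def S2_def by blast
  then show ?thesis by blast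
qed

context
  fixes gam :: drawing and W :: "complex set" and F :: "complex set set"
    and cs :: "complex list" and k :: nat and a b :: complex and p q :: "complex list"
  assumes pg: "plane_graph gam W F" and cyc: "is_cycle F cs" and rk: "rotate k cs = a # p @ b # q"
    and p: "p \<noteq> []" and q: "q \<noteq> []" and ab: "{a, b} \<in> F"
begin

lemma chord_side_walks:
  "is_walk F (a # p @ [b])" "distinct (a # p @ [b])" "3 \<le> length (a # p @ [b])"
  "is_walk F (a # rev q @ [b])" "distinct (a # rev q @ [b])" "3 \<le> length (a # rev q @ [b])"
proof -
  note split = chord_split_cycle[OF cyc rk p q ab]
  show "is_walk F (a # p @ [b])" "is_walk F (a # rev q @ [b])"
    using cycle_is_walk[OF split(1)] is_walk_rev[OF cycle_is_walk[OF split(2)]]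
    by simp_all
  show "distinct (a # p @ [b])" "3 \<le> length (a # p @ [b])"
    "distinct (a # rev q @ [b])" "3 \<le> length (a # rev q @ [b])"
    using split(1,2) by (auto simp: is_cycle_def)
qed

lemma chord_side_arcs:
  "simple_path (walk_path gam (a # p @ [b]))" "pathstart (walk_path gam (a # p @ [b])) = a"
  "pathfinish (walk_path gam (a # p @ [b])) = b"
  "simple_path (walk_path gam (a # rev q @ [b]))" "pathstart (walk_path gam (a # rev q @ [b])) = a"
  "pathfinish (walk_path gam (a # rev q @ [b])) = b"
  using arc_walk_path[OF pg chord_side_walks(1,2)] walk_path_ends[OF pg chord_side_walks(1)]
    arc_walk_path[OF pg chord_side_walks(4,5)] walk_path_ends[OF pg chord_side_walks(4)]
  by (simp_all add: arc_imp_simple_path)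

lemma chord_side_arcs_meet:
  "path_image (walk_path gam (a # p @ [b])) \<inter> path_image (walk_path gam (a # rev q @ [b])) \<subseteq> {a, b}"
  "path_image (walk_path gam (a # p @ [b])) \<inter> path_image (gam a b) \<subseteq> {a, b}"
  "path_image (walk_path gam (a # rev q @ [b])) \<inter> path_image (gam a b) \<subseteq> {a, b}"
proof -
  have "set (a # p @ [b]) \<inter> set (a # rev q @ [b]) \<subseteq> {hd (a # p @ [b]), last (a # p @ [b])}"
    using chord_split_cycle(4)[OF cyc rk p q ab] by auto
  then show "path_image (walk_path gam (a # p @ [b])) \<inter> path_image (walk_path gam (a # rev q @ [b])) \<subseteq> {a, b}"
    using walk_images_meet[OF pg chord_side_walks(1,4,2,3)] by simp
  show "path_image (walk_path gam (a # p @ [b])) \<inter> path_image (gam a b) \<subseteq> {a, b}"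
    "path_image (walk_path gam (a # rev q @ [b])) \<inter> path_image (gam a b) \<subseteq> {a, b}"
    using walk_image_meet_closing_edge[OF pg chord_side_walks(1-3)]
      walk_image_meet_closing_edge[OF pg chord_side_walks(4-6)] ab by simp_all
qed

lemma path_image_cycle_chord_sides:
  "path_image (cycle_path gam cs) =
    path_image (walk_path gam (a # p @ [b])) \<union> path_image (walk_path gam (a # rev q @ [b]))"
proof -
  note split = chord_split_cycle[OF cyc rk p q ab]
  have "path_image (walk_path gam (a # rev q @ [b])) = path_image (walk_path gam (b # q @ [a]))"
    using path_image_walk_path_rev[OF pg cycle_is_walk[OF split(2)]] by simp
  then show ?thesis
    using path_image_cycle_path[OF pg cyc] split(3) path_image_walk_path[OF pg chord_side_walks(1)]
      path_image_walk_path[OF pg cycle_is_walk[OF split(2)]]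
    by auto
qed

lemma closed_disk_chord_sides:
  "closed_disk gam (a # p @ [b]) =
    path_image (walk_path gam (a # p @ [b])) \<union> path_image (gam a b) \<union>
    inside (path_image (walk_path gam (a # p @ [b])) \<union> path_image (gam a b))"
  "closed_disk gam (b # q @ [a]) =
    path_image (walk_path gam (a # rev q @ [b])) \<union> path_image (gam a b) \<union>
    inside (path_image (walk_path gam (a # rev q @ [b])) \<union> path_image (gam a b))"
proof -
  note split = chord_split_cycle[OF cyc rk p q ab]
  show "closed_disk gam (a # p @ [b]) =
    path_image (walk_path gam (a # p @ [b])) \<union> path_image (gam a b) \<union>
    inside (path_image (walk_path gam (a # p @ [b])) \<union> path_image (gam a b))"
    using path_image_cycle_path_conv_walk[OF pg split(1)] unfolding closed_disk_def by simp
  have "path_image (walk_path gam (a # rev q @ [b])) = path_image (walk_path gam (b # q @ [a]))"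
    using path_image_walk_path_rev[OF pg cycle_is_walk[OF split(2)]] by simp
  then show "closed_disk gam (b # q @ [a]) =
    path_image (walk_path gam (a # rev q @ [b])) \<union> path_image (gam a b) \<union>
    inside (path_image (walk_path gam (a # rev q @ [b])) \<union> path_image (gam a b))"
    using path_image_cycle_path_conv_walk[OF pg split(2)] plane_graph_path_image_swap[OF pg ab]
    unfolding closed_disk_def by simp
qed

end

lemma chord_disks_meet:
  assumes pg: "plane_graph gam W F" and oc: "outer_cycle gam W F cs"
    and rk: "rotate k cs = a # p @ b # q" and p: "p \<noteq> []" and q: "q \<noteq> []" and ab: "{a, b} \<in> F"
  shows "disk_V gam W (a # p @ [b]) \<inter> disk_V gam W (b # q @ [a]) \<subseteq> {a, b}"
proof -
  have cyc: "is_cycle F cs" using oc by (simp add: outer_cycle_def)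
  define c1 c2 c where "c1 = walk_path gam (a # p @ [b])" and "c2 = walk_path gam (a # rev q @ [b])"
    and "c = gam a b"
  note arcs = chord_side_arcs[OF pg cyc rk p q ab, folded c1_def c2_def]
  note meet = chord_side_arcs_meet[OF pg cyc rk p q ab, folded c1_def c2_def c_def]
  have c: "simple_path c" "pathstart c = a" "pathfinish c = b" "a \<noteq> b"
    using plane_graph_edge(1,4-6)[OF pg ab] by (simp_all add: arc_imp_simple_path c_def)
  have "{a, b} \<subseteq> path_image c1" "{a, b} \<subseteq> path_image c2" "{a, b} \<subseteq> path_image c"
    using arcs c pathstart_in_path_image pathfinish_in_path_image by (metis empty_subsetI insert_subset)+
  moreover have "path_image c \<inter> inside (path_image c1 \<union> path_image c2) \<noteq> {}"
  proof -
    obtain m where m: "m \<in> path_image c" "m \<noteq> a" "m \<noteq> b"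
      using arc_interior_point plane_graph_edge(4-6)[OF pg ab] unfolding c_def by metis
    have "m \<in> drawn gam W F" using m(1) edge_image_subset_drawn[OF pg ab] c_def by blast
    then have "m \<in> path_image c1 \<union> path_image c2 \<union> inside (path_image c1 \<union> path_image c2)"
      using drawn_subset_outer_disk[OF pg oc] path_image_cycle_chord_sides[OF pg cyc rk p q ab]
      unfolding c1_def c2_def by auto
    moreover have "m \<notin> path_image c1 \<union> path_image c2" using m meet(2,3) by blast
    ultimately show ?thesis using m(1) by blast
  qed
  ultimately have "closed_disk gam (a # p @ [b]) \<inter> closed_disk gam (b # q @ [a]) \<subseteq> path_image c"
    using meet unfolding closed_disk_chord_sides[OF pg cyc rk p q ab, folded c1_def c2_def c_def]
    by (intro theta_closed_disks_inter[OF arcs(1-3) arcs(4-6) c]) auto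
  then show ?thesis
    using plane_graph_edge(8)[OF pg ab] unfolding disk_V_def c_def by blast
qed

lemma disk_E_subset: "disk_E gam F C \<subseteq> F"
  by (auto simp: disk_E_def)

lemma disk_E_vertices:
  assumes pg: "plane_graph gam W F" and e: "{u, t} \<in> disk_E gam F C"
  shows "u \<in> disk_V gam W C" "t \<in> disk_V gam W C"
proof -
  obtain x y where xy: "{u, t} = {x, y}" "path_image (gam x y) \<subseteq> closed_disk gam C" and F: "{x, y} \<in> F"
    using e unfolding disk_E_def by auto
  then have "{x, y} \<subseteq> W \<inter> closed_disk gam C"
    using plane_graph_edge(2,3)[OF pg F] plane_graph_ends_in_path_image[OF pg F] by auto
  then show "u \<in> disk_V gam W C" "t \<in> disk_V gam W C" using xy(1) unfolding disk_V_def by auto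
qed

lemma cycle_edge_in_disk_E:
  assumes pg: "plane_graph gam W F" and cyc: "is_cycle F C" and uv: "(u, v) \<in> set (cycle_edges C)"
  shows "{u, v} \<in> disk_E gam F C"
proof -
  have "{u, v} \<in> F" by (rule cycle_edge_in_graph[OF cyc uv])
  moreover have "path_image (gam u v) \<subseteq> closed_disk gam C"
    using path_image_cycle_path[OF pg cyc] uv unfolding closed_disk_def by auto
  ultimately show ?thesis using plane_graph_edge(1)[OF pg] unfolding disk_E_def by blast
qed

lemma chord_subgraphs:
  assumes pg: "plane_graph gam W F" and oc: "outer_cycle gam W F cs"
    and rk: "rotate k cs = a # p @ b # q" and "p \<noteq> []" "q \<noteq> []" and ab: "{a, b} \<in> F"
    and C12: "(C1, C2) \<in> {(a # p @ [b], b # q @ [a]), (b # q @ [a], a # p @ [b])}"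
    and v12: "succ_on cs v1 v2" "v1 \<in> set C1" "v2 \<in> set C1"
  shows "disk_V gam W C1 \<inter> disk_V gam W C2 \<subseteq> {a, b}" "{a, b} \<in> disk_E gam F C2"
    "{v1, v2} \<in> disk_E gam F C1"
proof -
  have cyc: "is_cycle F cs" using oc by (simp add: outer_cycle_def)
  note split = chord_split_cycle[OF cyc rk \<open>p \<noteq> []\<close> \<open>q \<noteq> []\<close> ab]
  have C: "is_cycle F C1" "is_cycle F C2" "set C1 \<inter> set C2 = {a, b}"
    "set (cycle_edges cs) = set (walk_edges C1) \<union> set (walk_edges C2)"
    "{last C1, hd C1} = {a, b}" "{last C2, hd C2} = {a, b}"
    using C12 split by auto
  show "disk_V gam W C1 \<inter> disk_V gam W C2 \<subseteq> {a, b}"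
    using C12 chord_disks_meet[OF pg oc rk \<open>p \<noteq> []\<close> \<open>q \<noteq> []\<close> ab] by auto
  have in_cycle: "(u, v) \<in> set (cycle_edges C)"
    if "is_cycle F C" "(u, v) \<in> set (walk_edges C) \<or> (u, v) = (last C, hd C)" for C u v
    using that cycle_edges_conv_walk_edges[OF is_cycle_not_Nil[OF that(1)]] by auto
  have closing: "{last C, hd C} \<in> disk_E gam F C" if "is_cycle F C" for C
    using cycle_edge_in_disk_E[OF pg that in_cycle[OF that]] by simp
  have walk: "{u, v} \<in> disk_E gam F C" if "is_cycle F C" "(u, v) \<in> set (walk_edges C)" for C u v
    using cycle_edge_in_disk_E[OF pg that(1) in_cycle[OF that(1)]] that(2) by simp
  show "{a, b} \<in> disk_E gam F C2" using closing[OF C(2)] C(6) by simp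
  have "(v1, v2) \<in> set (cycle_edges cs)"
    using v12(1) succ_on_iff_cycle_edges is_cycle_not_Nil[OF cyc] by blast
  then consider "(v1, v2) \<in> set (walk_edges C1)" | "(v1, v2) \<in> set (walk_edges C2)" using C(4) by blast
  then show "{v1, v2} \<in> disk_E gam F C1"
  proof cases
    case 1
    then show ?thesis using walk[OF C(1)] by blast
  next
    case 2
    have "v1 \<in> {a, b}" "v2 \<in> {a, b}" using walk_edges_in_set[OF 2] v12(2,3) C(3) by auto
    moreover have "v1 \<noteq> v2"
      using plane_graph_edge(1)[OF pg cycle_edge_in_graph[OF cyc \<open>(v1, v2) \<in> set (cycle_edges cs)\<close>]] .
    ultimately have "{v1, v2} = {a, b}" by auto
    then show ?thesis using closing[OF C(1)] C(5) by simp
  qed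
qed

section \<open>Invariants of the procedure\<close>

text \<open>
  A run with distinguished vertices v1, v2 does not orient the edge v1v2; in directed D e x y the
  pair e is the orientation given to it. The invariant no_cw_directed_triangle quantifies over both
  orientations because in a chord step the chord becomes the base edge of the second subproblem,
  and the first subproblem may orient it either way.
\<close>

type_synonym arcs = "(complex \<times> complex \<times> nat) set"

definition directed :: "arcs \<Rightarrow> complex \<times> complex \<Rightarrow> complex \<Rightarrow> complex \<Rightarrow> bool"
  where "directed D e x y \<longleftrightarrow> (x, y) = e \<or> (\<exists>s. (x, y, s) \<in> D)"

definition cw_directed_triangle :: "drawing \<Rightarrow> complex set set \<Rightarrow> arcs \<Rightarrow>
    complex \<times> complex \<Rightarrow> complex \<Rightarrow> complex \<Rightarrow> complex \<Rightarrow> bool" where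
  "cw_directed_triangle gam F D e a b c \<longleftrightarrow> is_triangle F a b c \<and>
     directed D e a b \<and> directed D e b c \<and> directed D e c a \<and> clockwise gam [a, b, c]"

definition no_cw_directed_triangle :: "drawing \<Rightarrow> complex set set \<Rightarrow> complex \<Rightarrow> complex \<Rightarrow>
    arcs \<Rightarrow> bool" where
  "no_cw_directed_triangle gam F v1 v2 D \<longleftrightarrow>
     (\<forall>e \<in> {(v1, v2), (v2, v1)}. \<forall>a b c. \<not> cw_directed_triangle gam F D e a b c)"

definition sound_arcs :: "complex set set \<Rightarrow> complex \<Rightarrow> complex \<Rightarrow> arcs \<Rightarrow> bool"
  where "sound_arcs F v1 v2 D \<longleftrightarrow> (\<forall>(u, t, s) \<in> D. {u, t} \<in> F \<and> t \<notin> {v1, v2})"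

lemma directed_Un: "directed (D1 \<union> D2) e u t \<longleftrightarrow> directed D1 e u t \<or> (\<exists>s. (u, t, s) \<in> D2)"
  unfolding directed_def by blast

lemma cw_directed_triangle_rotate:
  assumes pg: "plane_graph gam W F" and t: "cw_directed_triangle gam F D e a b c"
  shows "cw_directed_triangle gam F D e b c a"
proof -
  have "clockwise gam (rotate 1 [a, b, c])"
    using t clockwise_rotate[OF pg is_triangle_imp_is_cycle] unfolding cw_directed_triangle_def by blast
  then show ?thesis using t is_triangle_rotate unfolding cw_directed_triangle_def by simp
qed

lemma cw_directed_triangle_rotate_to:
  assumes "plane_graph gam W F" "cw_directed_triangle gam F D e a b c" "x \<in> {a, b, c}"
  obtains y z where "cw_directed_triangle gam F D e x y z"
  using assms cw_directed_triangle_rotate[OF assms(1)] by blast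

lemma orient_at_iff:
  "(x, y, s) \<in> orient_at F cs v3 \<longleftrightarrow>
     (y = v3 \<and> s = 1 \<and> {x, v3} \<in> F \<and> (succ_on cs x v3 \<or> succ_on cs v3 x)) \<or>
     (x = v3 \<and> s = 2 \<and> {y, v3} \<in> F \<and> \<not> (succ_on cs y v3 \<or> succ_on cs v3 y))"
  unfolding orient_at_def by auto

lemma sound_arcs_orient_at:
  assumes cyc: "is_cycle F cs" and nc: "\<not> has_chord F cs"
    and s12: "succ_on cs v1 v2" and s23: "succ_on cs v2 v3"
  shows "sound_arcs F v1 v2 (orient_at F cs v3)"
  unfolding sound_arcs_def
proof (intro ballI, clarify)
  fix u t s assume "(u, t, s) \<in> orient_at F cs v3"
  moreover have "distinct [v1, v2, v3]"
    using succ_on_distinct3[OF _ _ s12 s23] cyc by (simp add: is_cycle_def)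
  moreover have "\<not> succ_on cs v3 v1 \<Longrightarrow> {v1, v3} \<notin> F"
    using chordless_skip_edge[OF cyc nc s12 s23] by blast
  ultimately show "{u, t} \<in> F \<and> t \<notin> {v1, v2}"
    using s23 by (auto simp: orient_at_iff insert_commute)
qed

lemma orient_step_no_cw_at_removed_vertex:
  assumes pg: "plane_graph gam W F" and oc: "outer_cycle gam W F cs" and nc: "\<not> has_chord F cs"
    and s12: "succ_on cs v1 v2" and s23: "succ_on cs v2 v3"
    and sound: "sound_arcs {e \<in> F. v3 \<notin> e} v1 v2 D'" and o12: "o12 \<in> {(v1, v2), (v2, v1)}"
  shows "\<not> cw_directed_triangle gam F (orient_at F cs v3 \<union> D') o12 v3 b c"
proof
  define D where "D = orient_at F cs v3 \<union> D'"
  assume "cw_directed_triangle gam F (orient_at F cs v3 \<union> D') o12 v3 b c"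
  then have t: "cw_directed_triangle gam F D o12 v3 b c" unfolding D_def .
  have cyc: "is_cycle F cs" using oc by (simp add: outer_cycle_def)
  have d: "distinct cs" using cyc by (simp add: is_cycle_def)
  have dist: "distinct [v1, v2, v3]"
    using succ_on_distinct3[OF d _ s12 s23] cyc by (simp add: is_cycle_def)
  have tri: "distinct [v3, b, c]" "{v3, b} \<in> F" "{b, c} \<in> F"
    and dir: "directed D o12 v3 b" "directed D o12 b c" "directed D o12 c v3"
    using t unfolding cw_directed_triangle_def is_triangle_def by auto
  have "(x, y, s) \<notin> D'" if "v3 \<in> {x, y}" for x y s
    using sound that unfolding sound_arcs_def by auto
  moreover have "(v3, b) \<noteq> o12" "(c, v3) \<noteq> o12" using o12 dist by auto
  ultimately obtain s s' where "(v3, b, s) \<in> orient_at F cs v3" "(c, v3, s') \<in> orient_at F cs v3"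
    using dir(1,3) unfolding directed_def D_def by blast
  then have b_far: "\<not> (succ_on cs b v3 \<or> succ_on cs v3 b)" and c_near: "succ_on cs c v3 \<or> succ_on cs v3 c"
    using tri(1) by (auto simp: orient_at_iff)
  from c_near show False
  proof
    assume "succ_on cs c v3"
    then have c: "c = v2" by (rule succ_on_unique_pred[OF d _ s23])
    have "b \<noteq> v1"
      using chordless_skip_edge[OF cyc nc s12 s23] tri(2) b_far by (auto simp: insert_commute)
    then have "(b, v2) \<noteq> o12" using o12 tri(1) c by auto
    then obtain s'' where "(b, v2, s'') \<in> D" using dir(2) c unfolding directed_def by blast
    moreover have "(b, v2, s'') \<notin> orient_at F cs v3" using tri(1) dist c by (auto simp: orient_at_iff)
    ultimately have "(b, v2, s'') \<in> D'" unfolding D_def by blast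
    then show False using sound unfolding sound_arcs_def by auto
  next
    assume "succ_on cs v3 c"
    then have "\<not> clockwise gam [c, v3, b]"
      by (rule outer_edge_triangle_not_clockwise[OF pg oc _ tri(2,3)])
    moreover have "cw_directed_triangle gam F D o12 c v3 b"
      using cw_directed_triangle_rotate[OF pg] t by blast
    ultimately show False unfolding cw_directed_triangle_def by blast
  qed
qed

lemma orient_step_invariants:
  assumes pg: "plane_graph gam W F" and oc: "outer_cycle gam W F cs" and nc: "\<not> has_chord F cs"
    and s12: "succ_on cs v1 v2" and s23: "succ_on cs v2 v3"
    and sound: "sound_arcs {e \<in> F. v3 \<notin> e} v1 v2 D'"
    and no_cw: "no_cw_directed_triangle gam {e \<in> F. v3 \<notin> e} v1 v2 D'"
  shows "sound_arcs F v1 v2 (orient_at F cs v3 \<union> D')"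
    and "no_cw_directed_triangle gam F v1 v2 (orient_at F cs v3 \<union> D')"
proof -
  have cyc: "is_cycle F cs" using oc by (simp add: outer_cycle_def)
  show "sound_arcs F v1 v2 (orient_at F cs v3 \<union> D')"
    using sound_arcs_orient_at[OF cyc nc s12 s23] sound unfolding sound_arcs_def by auto
  show "no_cw_directed_triangle gam F v1 v2 (orient_at F cs v3 \<union> D')"
    unfolding no_cw_directed_triangle_def
  proof (intro ballI allI notI)
    fix o12 a b c assume o12: "o12 \<in> {(v1, v2), (v2, v1)}"
      and t: "cw_directed_triangle gam F (orient_at F cs v3 \<union> D') o12 a b c"
    show False
    proof (cases "v3 \<in> {a, b, c}")
      case True
      then obtain y z where "cw_directed_triangle gam F (orient_at F cs v3 \<union> D') o12 v3 y z"
        by (rule cw_directed_triangle_rotate_to[OF pg t])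
      then show False using orient_step_no_cw_at_removed_vertex[OF pg oc nc s12 s23 sound o12] by blast
    next
      case False
      have "directed D' o12 x y" if "directed (orient_at F cs v3 \<union> D') o12 x y" "x \<noteq> v3" "y \<noteq> v3" for x y
        using that unfolding directed_def by (auto simp: orient_at_iff)
      then have "cw_directed_triangle gam {e \<in> F. v3 \<notin> e} D' o12 a b c"
        using t False unfolding cw_directed_triangle_def is_triangle_def by auto
      then show False using no_cw o12 unfolding no_cw_directed_triangle_def by blast
    qed
  qed
qed

context
  fixes gam :: drawing and W :: "complex set" and F F1 F2 :: "complex set set" and V1 V2 :: "complex set"
    and a b v1 v2 x y :: complex and D1 D2 :: arcs
  assumes pg: "plane_graph gam W F"
    and F1: "F1 \<subseteq> F" "\<And>u t. {u, t} \<in> F1 \<Longrightarrow> u \<in> V1 \<and> t \<in> V1"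
    and F2: "F2 \<subseteq> F" "\<And>u t. {u, t} \<in> F2 \<Longrightarrow> u \<in> V2 \<and> t \<in> V2"
    and V12: "V1 \<inter> V2 \<subseteq> {a, b}" and ab: "{a, b} \<in> F2" and v12: "{v1, v2} \<in> F1"
    and xy: "{x, y} = {a, b}"
    and sound1: "sound_arcs F1 v1 v2 D1" and no_cw1: "no_cw_directed_triangle gam F1 v1 v2 D1"
    and sound2: "sound_arcs F2 x y D2" and no_cw2: "no_cw_directed_triangle gam F2 x y D2"
begin

lemma chord_step_arc_in_second: "(u, t, s) \<in> D2 \<Longrightarrow> {u, t} \<in> F2 \<and> u \<in> V2 \<and> t \<in> V2 \<and> t \<notin> {a, b}"
  using sound2 F2(2) xy unfolding sound_arcs_def by blast

lemma chord_step_directed_in_first: "o12 \<in> {(v1, v2), (v2, v1)} \<Longrightarrow> directed D1 o12 u t \<Longrightarrow> {u, t} \<in> F1"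
  using v12 sound1 unfolding directed_def sound_arcs_def by (auto simp: insert_commute)

lemma chord_step_sound: "sound_arcs F v1 v2 (D1 \<union> D2)"
  using sound1 F1 chord_step_arc_in_second F2(1) v12 V12 unfolding sound_arcs_def by blast

lemma chord_step_no_cw_in_first:
  assumes o12: "o12 \<in> {(v1, v2), (v2, v1)}" and t: "cw_directed_triangle gam F (D1 \<union> D2) o12 r1 r2 r3"
    and V: "{r1, r2, r3} \<subseteq> V1"
  shows False
proof -
  have "directed D1 o12 u t" if "directed (D1 \<union> D2) o12 u t" "u \<in> V1" "t \<in> V1" "u \<noteq> t" for u t
    using that chord_step_arc_in_second V12 unfolding directed_Un by blast
  then have "cw_directed_triangle gam F1 D1 o12 r1 r2 r3"
    using t V chord_step_directed_in_first[OF o12] unfolding cw_directed_triangle_def is_triangle_def by auto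
  then show False using no_cw1 o12 unfolding no_cw_directed_triangle_def by blast
qed

lemma chord_step_no_cw_leaving_first:
  assumes o12: "o12 \<in> {(v1, v2), (v2, v1)}" and t: "cw_directed_triangle gam F (D1 \<union> D2) o12 r1 r2 r3"
    and r1: "r1 \<notin> V1"
  shows False
proof -
  have tri: "distinct [r1, r2, r3]" and cw: "clockwise gam [r1, r2, r3]"
    and dir: "directed (D1 \<union> D2) o12 r1 r2" "directed (D1 \<union> D2) o12 r2 r3" "directed (D1 \<union> D2) o12 r3 r1"
    using t unfolding cw_directed_triangle_def is_triangle_def by auto
  have not1: "\<not> directed D1 o12 u t" if "r1 \<in> {u, t}" for u t
    using chord_step_directed_in_first[OF o12] F1(2) r1 that by blast
  have e12: "\<exists>s. (r1, r2, s) \<in> D2" and e31: "\<exists>s. (r3, r1, s) \<in> D2"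
    using dir(1,3) not1 unfolding directed_Un by auto
  then have F2_edges: "{r1, r2} \<in> F2" "{r3, r1} \<in> F2" and V2: "r2 \<in> V2" "r3 \<in> V2"
    using chord_step_arc_in_second by blast+
  show False
  proof (cases "\<exists>s. (r2, r3, s) \<in> D2")
    case True
    then have "cw_directed_triangle gam F2 D2 (x, y) r1 r2 r3"
      using tri cw e12 e31 F2_edges chord_step_arc_in_second
      unfolding cw_directed_triangle_def is_triangle_def directed_def by blast
    then show False using no_cw2 unfolding no_cw_directed_triangle_def by blast
  next
    case False
    then have "{r2, r3} \<in> F1" using dir(2) chord_step_directed_in_first[OF o12] unfolding directed_Un by blast
    then have "r2 \<in> V1" "r3 \<in> V1" using F1(2) by blast+
    then have "{r2, r3} = {a, b}" using V12 V2 tri by auto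
    then have "(r2, r3) \<in> {(x, y), (y, x)}" and "{r2, r3} \<in> F2"
      using xy ab by (auto simp: doubleton_eq_iff insert_commute)
    moreover have "cw_directed_triangle gam F2 D2 (r2, r3) r1 r2 r3"
      using tri cw e12 e31 F2_edges \<open>{r2, r3} \<in> F2\<close>
      unfolding cw_directed_triangle_def is_triangle_def directed_def by blast
    ultimately show False using no_cw2 unfolding no_cw_directed_triangle_def by blast
  qed
qed

lemma chord_step_no_cw: "no_cw_directed_triangle gam F v1 v2 (D1 \<union> D2)"
  unfolding no_cw_directed_triangle_def
proof (intro ballI allI notI)
  fix o12 r1 r2 r3 assume o12: "o12 \<in> {(v1, v2), (v2, v1)}"
    and t: "cw_directed_triangle gam F (D1 \<union> D2) o12 r1 r2 r3"
  show False
  proof (cases "{r1, r2, r3} \<subseteq> V1")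
    case True
    then show False by (rule chord_step_no_cw_in_first[OF o12 t])
  next
    case False
    then obtain r where "r \<in> {r1, r2, r3}" "r \<notin> V1" by blast
    moreover from this(1) obtain s2 s3 where "cw_directed_triangle gam F (D1 \<union> D2) o12 r s2 s3"
      by (rule cw_directed_triangle_rotate_to[OF pg t])
    ultimately show False using chord_step_no_cw_leaving_first[OF o12] by blast
  qed
qed

end

lemma run_invariants:
  "run gam W F v1 v2 D \<Longrightarrow> sound_arcs F v1 v2 D \<and> no_cw_directed_triangle gam F v1 v2 D"
proof (induction rule: run.induct)
  case (chord W F cs v1 v2 k a p b q C1 C2 D1 x y D2)
  have pg: "plane_graph gam W F" using chord.hyps(1) by (simp add: near_triangulation_def)
  note C = chord_subgraphs[OF pg chord.hyps(2,4-8) chord.hyps(3,9,10)]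
  show ?case
    using chord_step_sound[OF pg disk_E_subset _ disk_E_subset _ C chord.hyps(12)]
      chord_step_no_cw[OF pg disk_E_subset _ disk_E_subset _ C chord.hyps(12)]
      chord.IH disk_E_vertices[OF pg] by blast
next
  case (orient_last W F cs v1 v2 v3)
  \<comment> \<open>the last removal is a removal step followed by an empty run\<close>
  have pg: "plane_graph gam W F" using orient_last.hyps(1) by (simp add: near_triangulation_def)
  have "\<not> is_triangle {e \<in> F. v3 \<notin> e} a b c" for a b c
  proof
    assume "is_triangle {e \<in> F. v3 \<notin> e} a b c"
    then have "{a, b, c} \<subseteq> W - {v3}" "distinct [a, b, c]"
      using plane_graph_edge(2,3)[OF pg] unfolding is_triangle_def by auto
    then show False using orient_last.hyps(6) by auto
  qed
  then have "no_cw_directed_triangle gam {e \<in> F. v3 \<notin> e} v1 v2 {}"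
    unfolding no_cw_directed_triangle_def cw_directed_triangle_def by blast
  moreover have "sound_arcs {e \<in> F. v3 \<notin> e} v1 v2 {}" by (simp add: sound_arcs_def)
  ultimately show ?case
    using orient_step_invariants[OF pg orient_last.hyps(2,4,3,5), of "{}"] by simp
next
  case (orient_rec W F cs v1 v2 v3 D')
  have pg: "plane_graph gam W F" using orient_rec.hyps(1) by (simp add: near_triangulation_def)
  show ?case using orient_step_invariants[OF pg orient_rec.hyps(2,4,3,5)] orient_rec.IH by blast
qed

theorem proposition4p2:
  fixes gam :: drawing and V :: "complex set" and E :: "complex set set"
    and cs :: "complex list" and v1 v2 :: complex
    and D :: "(complex \<times> complex \<times> nat) set" and o12 :: "complex \<times> complex"
  assumes "triangular_graph gam V E"
    and "outer_cycle gam V E cs"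
    and "succ_on cs v1 v2"
    and "o12 \<in> {(v1, v2), (v2, v1)}"
    and "run gam V E v1 v2 D"
  shows "\<not> (\<exists>a b c. is_triangle E a b c \<and>
            (\<forall>(x, y) \<in> {(a, b), (b, c), (c, a)}.
               (x, y) = o12 \<or> (\<exists>s. (x, y, s) \<in> D)) \<and>
            clockwise gam [a, b, c])"
proof
  \<comment> \<open>only the run is used: each of its steps records the hypotheses on the current subgraph\<close>
  assume "\<exists>a b c. is_triangle E a b c \<and>
            (\<forall>(x, y) \<in> {(a, b), (b, c), (c, a)}. (x, y) = o12 \<or> (\<exists>s. (x, y, s) \<in> D)) \<and>
            clockwise gam [a, b, c]"
  then obtain a b c where "cw_directed_triangle gam E D o12 a b c"
    unfolding cw_directed_triangle_def directed_def by auto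
  then show False
    using run_invariants[OF assms(5)] assms(4) unfolding no_cw_directed_triangle_def by blast
qed

end
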